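(* Let $m,n\ge1$, $a\in(0,\infty)^m$, $b\in(0,\infty)^n$, and let $\Omega$ be a real $m\times n$ matrix. Then the function $F$ attains its maximum over $\mathcal A$ on the subset $\tilde{\mathcal A}$. Moreover, $\tilde{\mathcal A}$ is a convex, compact subset of a finite-dimensional Euclidean space, and $F$ is concave when restricted to $\tilde{\mathcal A}$.
   Context: $\mathcal A$ is the set of pairs $(A,B)$ of $(m+1)\times(n+1)$ real matrices (indices $i=0,\dots,m$, $j=0,\dots,n$) with: $A_{ij},B_{ij}\ge0$; $a_i=\sum_{j=0}^nA_{ij}$ for $i=1,\dots,m$; $A_{0j}=0$ for all $j$; $b_j=\sum_{i=0}^mB_{ij}$ for $j=1,\dots,n$; $B_{i0}=0$ for all $i$. $F:\mathcal A\to\mathbb{R}$, $F(A,B)=\sum_{i=1}^m\sum_{j=1}^n\sqrt{A_{ij}B_{ij}}\,\Omega_{ij}$. $\tilde{\mathcal A}\subset\mathcal A$ consists of those $(A,B)$ with: (1) $A_{ij}=B_{ij}=0$ whenever $i,j\ge1$ and $\Omega_{ij}\le0$; (2) for $j\ge1$, $B_{0j}=0$ if there is $i\ge1$ with $\Omega_{ij}>0$; (3) for $i\ge1$, $A_{i0}=0$ if there is $j\ge1$ with $\Omega_{ij}>0$. *)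

theory Defs
  imports "HOL-Analysis.Analysis"
begin

text \<open>Row index set {0..m} is modelled by the type 'm option (None = 0, Some i = i),
  column index set {0..n} by 'n option; m = CARD('m) >= 1, n = CARD('n) >= 1.\<close>

type_synonym ('m, 'n) mat0 = "real ^ 'n option ^ 'm option"

definition calA :: "real ^ 'm \<Rightarrow> real ^ 'n \<Rightarrow> (('m::finite, 'n::finite) mat0 \<times> ('m, 'n) mat0) set" where
  "calA a b = {(A, B).
     (\<forall>i j. A $ i $ j \<ge> 0 \<and> B $ i $ j \<ge> 0) \<and>
     (\<forall>i. (\<Sum>j\<in>UNIV. A $ Some i $ j) = a $ i) \<and>
     (\<forall>j. A $ None $ j = 0) \<and>
     (\<forall>j. (\<Sum>i\<in>UNIV. B $ i $ Some j) = b $ j) \<and>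
     (\<forall>i. B $ i $ None = 0)}"

definition Fobj :: "real ^ 'n ^ 'm \<Rightarrow> ('m::finite, 'n::finite) mat0 \<times> ('m, 'n) mat0 \<Rightarrow> real" where
  "Fobj \<Omega> AB = (\<Sum>i\<in>UNIV. \<Sum>j\<in>UNIV.
      sqrt (fst AB $ Some i $ Some j * snd AB $ Some i $ Some j) * \<Omega> $ i $ j)"

definition calA_tilde :: "real ^ 'n ^ 'm \<Rightarrow> real ^ 'm \<Rightarrow> real ^ 'n \<Rightarrow>
    (('m::finite, 'n::finite) mat0 \<times> ('m, 'n) mat0) set" where
  "calA_tilde \<Omega> a b = {(A, B) \<in> calA a b.
     (\<forall>i j. \<Omega> $ i $ j \<le> 0 \<longrightarrow> A $ Some i $ Some j = 0 \<and> B $ Some i $ Some j = 0) \<and>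
     (\<forall>j. (\<exists>i. \<Omega> $ i $ j > 0) \<longrightarrow> B $ None $ Some j = 0) \<and>
     (\<forall>i. (\<exists>j. \<Omega> $ i $ j > 0) \<longrightarrow> A $ Some i $ None = 0)}"

end

theory Submission
  imports Defs
begin

text \<open>
  A pair \<open>(A, B) \<in> \<A>\<close> splits into two independent parts: \<open>A\<close> is a nonnegative matrix with
  prescribed row sums, and the transpose of \<open>B\<close> is one with prescribed column sums. In a row
  of \<open>A\<close> that meets a positive entry of \<open>\<Omega>\<close>, all mass off the positive entries (column 0
  included) can be moved onto one entry with \<open>\<Omega>\<^sub>i\<^sub>j > 0\<close>; in the other rows it is moved to
  column 0. Likewise for \<open>B\<close>. This only increases the entries with \<open>\<Omega>\<^sub>i\<^sub>j > 0\<close> and kills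
  the other entries with \<open>i, j \<ge> 1\<close>, so \<open>F\<close> does not decrease and the result lies in \<open>\<tilde>\<A>\<close>.
  The set \<open>\<tilde>\<A>\<close> is a product of two polytopes, hence convex and compact, so the continuous
  \<open>F\<close> attains its maximum there, and this is a maximum over \<open>\<A>\<close>. On \<open>\<tilde>\<A>\<close> every term
  of \<open>F\<close> is either zero or a positive multiple of the concave function \<open>(x, y) \<mapsto> \<surd>(x y)\<close>.
\<close>

lemma convex_comb_sqrt_mult_le:
  fixes x1 y1 x2 y2 u v :: real
  assumes "x1 \<ge> 0" "y1 \<ge> 0" "x2 \<ge> 0" "y2 \<ge> 0" "u \<ge> 0" "v \<ge> 0"
  shows "u * sqrt (x1 * y1) + v * sqrt (x2 * y2) \<le> sqrt ((u * x1 + v * x2) * (u * y1 + v * y2))"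
proof (rule real_le_rsqrt)
  have "2 * (sqrt (x1 * y1) * sqrt (x2 * y2)) = 2 * (sqrt (x1 * y2) * sqrt (x2 * y1))"
    by (simp add: real_sqrt_mult[symmetric] ac_simps)
  also have "\<dots> \<le> (sqrt (x1 * y2))\<^sup>2 + (sqrt (x2 * y1))\<^sup>2"
    using sum_squares_bound[of "sqrt (x1 * y2)" "sqrt (x2 * y1)"] by simp
  also have "\<dots> = x1 * y2 + x2 * y1"
    using assms by simp
  finally have am_gm: "2 * (sqrt (x1 * y1) * sqrt (x2 * y2)) \<le> x1 * y2 + x2 * y1" .
  have "(u * sqrt (x1 * y1) + v * sqrt (x2 * y2))\<^sup>2
      = u\<^sup>2 * (x1 * y1) + v\<^sup>2 * (x2 * y2) + u * v * (2 * (sqrt (x1 * y1) * sqrt (x2 * y2)))"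
    using assms by (simp add: power2_eq_square algebra_simps real_sqrt_mult[symmetric])
  also have "\<dots> \<le> u\<^sup>2 * (x1 * y1) + v\<^sup>2 * (x2 * y2) + u * v * (x1 * y2 + x2 * y1)"
    using am_gm assms by (simp add: mult_left_mono)
  also have "\<dots> = (u * x1 + v * x2) * (u * y1 + v * y2)"
    by (simp add: power2_eq_square algebra_simps)
  finally show "(u * sqrt (x1 * y1) + v * sqrt (x2 * y2))\<^sup>2 \<le> (u * x1 + v * x2) * (u * y1 + v * y2)" .
qed

lemma row_redistribution:
  fixes x :: "'n::finite option \<Rightarrow> real" and P :: "'n set"
  assumes nonneg: "\<And>k. 0 \<le> x k"
  obtains y where "\<And>k. 0 \<le> y k" "(\<Sum>k\<in>UNIV. y k) = (\<Sum>k\<in>UNIV. x k)"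
    "\<And>j. j \<notin> P \<Longrightarrow> y (Some j) = 0" "P \<noteq> {} \<Longrightarrow> y None = 0"
    "\<And>j. j \<in> P \<Longrightarrow> x (Some j) \<le> y (Some j)"
proof
  define r where "r = (\<Sum>k\<in>UNIV. x k) - (\<Sum>k\<in>Some ` P. x k)"
  define k0 where "k0 = (if P = {} then None else Some (SOME j. j \<in> P))"
  define y where "y k = (if k \<in> Some ` P then x k else 0) + (if k = k0 then r else 0)" for k
  have "0 \<le> r"
    unfolding r_def using sum_mono2[of UNIV "Some ` P" x] nonneg by simp
  then show "0 \<le> y k" for k
    using nonneg by (simp add: y_def)
  have "(\<Sum>k\<in>UNIV. y k) = (\<Sum>k\<in>Some ` P. x k) + r"
    by (simp add: y_def sum.distrib sum.If_cases Int_absorb1)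
  then show "(\<Sum>k\<in>UNIV. y k) = (\<Sum>k\<in>UNIV. x k)"
    by (simp add: r_def)
  have k0: "k0 \<in> Some ` P" if "P \<noteq> {}"
    using that by (simp add: k0_def some_in_eq)
  show "y (Some j) = 0" if "j \<notin> P" for j
    using that k0 by (auto simp: y_def k0_def)
  show "y None = 0" if "P \<noteq> {}"
    using that by (auto simp: y_def k0_def)
  show "x (Some j) \<le> y (Some j)" if "j \<in> P" for j
    using that \<open>0 \<le> r\<close> by (simp add: y_def)
qed

definition row_plans :: "real ^ 'm::finite \<Rightarrow> (real ^ 'n::finite option ^ 'm option) set" where
  "row_plans a = {A. (\<forall>i j. 0 \<le> A $ i $ j) \<and> (\<forall>i. (\<Sum>j\<in>UNIV. A $ Some i $ j) = a $ i) \<and>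
     (\<forall>j. A $ None $ j = 0)}"

definition adapted_row_plans :: "real ^ 'n::finite ^ 'm::finite \<Rightarrow> real ^ 'm \<Rightarrow> (real ^ 'n option ^ 'm option) set"
  where "adapted_row_plans \<Omega> a = row_plans a \<inter> {A.
     (\<forall>i j. \<Omega> $ i $ j \<le> 0 \<longrightarrow> A $ Some i $ Some j = 0) \<and>
     (\<forall>i. (\<exists>j. 0 < \<Omega> $ i $ j) \<longrightarrow> A $ Some i $ None = 0)}"

lemma mem_transpose_image: "B \<in> transpose ` S \<longleftrightarrow> transpose B \<in> S"
  by (metis image_iff transpose_transpose)

lemma transpose_nth [simp]: "transpose A $ i $ j = A $ j $ i"
  by (simp add: transpose_def)

lemma calA_eq_Times: "calA a b = row_plans a \<times> transpose ` row_plans b"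
  by (auto simp: calA_def row_plans_def mem_transpose_image)

lemma calA_tilde_eq_Times:
  "calA_tilde \<Omega> a b = adapted_row_plans \<Omega> a \<times> transpose ` adapted_row_plans (transpose \<Omega>) b"
  by (auto simp: calA_tilde_def calA_def adapted_row_plans_def row_plans_def mem_transpose_image)

lemma row_plans_nonempty:
  fixes a :: "real ^ 'm::finite"
  assumes "\<And>i. 0 \<le> a $ i"
  shows "(row_plans a :: (real ^ 'n::finite option ^ 'm option) set) \<noteq> {}"
proof -
  define A :: "real ^ 'n::finite option ^ 'm option" where
    "A = (\<chi> r k. case r of None \<Rightarrow> 0 | Some i \<Rightarrow> if k = None then a $ i else 0)"
  have "A \<in> row_plans a"
    using assms by (auto simp: row_plans_def A_def split: option.splits)
  then show ?thesis by blast
qed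

lemma closed_row_plans: "closed (row_plans a)"
  unfolding row_plans_def
  by (intro closed_Collect_conj closed_Collect_all closed_Collect_le closed_Collect_eq
      continuous_intros)

lemma row_plans_subset_interval:
  "row_plans a \<subseteq> {0 .. \<chi> r k. case r of None \<Rightarrow> 0 | Some i \<Rightarrow> a $ i}"
proof
  fix A assume A: "A \<in> row_plans a"
  have "A $ Some i $ k \<le> a $ i" for i k
  proof -
    have "A $ Some i $ k \<le> (\<Sum>j\<in>UNIV. A $ Some i $ j)"
      using A by (intro member_le_sum) (auto simp: row_plans_def)
    then show ?thesis
      using A by (simp add: row_plans_def)
  qed
  then show "A \<in> {0 .. \<chi> r k. case r of None \<Rightarrow> 0 | Some i \<Rightarrow> a $ i}"
    using A by (auto simp: row_plans_def less_eq_vec_def split: option.splits)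
qed

lemma compact_row_plans: "compact (row_plans a)"
proof -
  have "row_plans a = {0 .. \<chi> r k. case r of None \<Rightarrow> 0 | Some i \<Rightarrow> a $ i} \<inter> row_plans a"
    using row_plans_subset_interval by blast
  then show ?thesis
    by (metis compact_Int_closed compact_interval closed_row_plans)
qed

lemma compact_adapted_row_plans: "compact (adapted_row_plans \<Omega> a)"
  unfolding adapted_row_plans_def
  by (intro compact_Int_closed compact_row_plans closed_Collect_conj closed_Collect_all
      closed_Collect_imp closed_Collect_eq open_Collect_const continuous_intros)

lemma convex_adapted_row_plans: "convex (adapted_row_plans \<Omega> a)"
proof (rule convexI)
  fix A A' and u v :: real
  assume A: "A \<in> adapted_row_plans \<Omega> a" and A': "A' \<in> adapted_row_plans \<Omega> a"
    and uv: "0 \<le> u" "0 \<le> v" "u + v = 1"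
  have "(\<Sum>j\<in>UNIV. u * A $ Some i $ j + v * A' $ Some i $ j) = (u + v) * a $ i" for i
    using A A' by (simp add: adapted_row_plans_def row_plans_def sum.distrib
        flip: sum_distrib_left distrib_right)
  then show "u *\<^sub>R A + v *\<^sub>R A' \<in> adapted_row_plans \<Omega> a"
    using A A' uv by (auto simp: adapted_row_plans_def row_plans_def)
qed

lemma linear_transpose: "linear (transpose :: 'a::real_vector ^ 'n::finite ^ 'm::finite \<Rightarrow> _)"
  by (rule linearI) (simp_all add: transpose_def vec_eq_iff)

lemma adapted_row_plan_above:
  fixes A :: "real ^ 'n::finite option ^ 'm::finite option" and \<Omega> :: "real ^ 'n ^ 'm"
  assumes A: "A \<in> row_plans a"
  obtains A' where "A' \<in> adapted_row_plans \<Omega> a"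
    "\<And>i j. 0 < \<Omega> $ i $ j \<Longrightarrow> A $ Some i $ Some j \<le> A' $ Some i $ Some j"
proof -
  define P where "P i = {j. 0 < \<Omega> $ i $ j}" for i
  have "\<exists>y. (\<forall>k. 0 \<le> y k) \<and> (\<Sum>k\<in>UNIV. y k) = (\<Sum>k\<in>UNIV. A $ Some i $ k) \<and>
      (\<forall>j. j \<notin> P i \<longrightarrow> y (Some j) = 0) \<and> (P i \<noteq> {} \<longrightarrow> y None = 0) \<and>
      (\<forall>j\<in>P i. A $ Some i $ Some j \<le> y (Some j))" for i
    by (rule row_redistribution[of "\<lambda>k. A $ Some i $ k" "P i"]) (use A in \<open>simp add: row_plans_def\<close>, blast)
  then obtain Y where Y: "\<And>i. (\<forall>k. 0 \<le> Y i k) \<and> (\<Sum>k\<in>UNIV. Y i k) = (\<Sum>k\<in>UNIV. A $ Some i $ k) \<and>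
      (\<forall>j. j \<notin> P i \<longrightarrow> Y i (Some j) = 0) \<and> (P i \<noteq> {} \<longrightarrow> Y i None = 0) \<and>
      (\<forall>j\<in>P i. A $ Some i $ Some j \<le> Y i (Some j))"
    by metis
  define A' :: "real ^ 'n option ^ 'm option" where
    "A' = (\<chi> r k. case r of None \<Rightarrow> 0 | Some i \<Rightarrow> Y i k)"
  show thesis
  proof
    show "A' \<in> adapted_row_plans \<Omega> a"
      using Y A by (auto simp: A'_def P_def adapted_row_plans_def row_plans_def leD split: option.splits)
    show "A $ Some i $ Some j \<le> A' $ Some i $ Some j" if "0 < \<Omega> $ i $ j" for i j
      using Y that by (simp add: A'_def P_def)
  qed
qed

lemma Fobj_mono:
  assumes "\<And>i j. 0 \<le> A $ Some i $ Some j" "\<And>i j. 0 \<le> B $ Some i $ Some j"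
    and "\<And>i j. 0 < \<Omega> $ i $ j \<Longrightarrow> A $ Some i $ Some j \<le> A' $ Some i $ Some j"
    and "\<And>i j. 0 < \<Omega> $ i $ j \<Longrightarrow> B $ Some i $ Some j \<le> B' $ Some i $ Some j"
    and "\<And>i j. \<Omega> $ i $ j \<le> 0 \<Longrightarrow> A' $ Some i $ Some j = 0"
  shows "Fobj \<Omega> (A, B) \<le> Fobj \<Omega> (A', B')"
  unfolding Fobj_def fst_conv snd_conv
proof (intro sum_mono)
  fix i j
  show "sqrt (A $ Some i $ Some j * B $ Some i $ Some j) * \<Omega> $ i $ j
      \<le> sqrt (A' $ Some i $ Some j * B' $ Some i $ Some j) * \<Omega> $ i $ j"
  proof (cases "0 < \<Omega> $ i $ j")
    case True
    then show ?thesis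
      using assms by (intro mult_right_mono real_sqrt_le_mono mult_mono') auto
  next
    case False
    then show ?thesis
      using assms by (simp add: mult_nonneg_nonpos)
  qed
qed

lemma concave_on_Fobj:
  assumes "convex S"
    and nonneg: "\<And>A B i j. (A, B) \<in> S \<Longrightarrow> 0 \<le> A $ Some i $ Some j \<and> 0 \<le> B $ Some i $ Some j"
    and vanish: "\<And>A B i j. (A, B) \<in> S \<Longrightarrow> \<Omega> $ i $ j \<le> 0 \<Longrightarrow> A $ Some i $ Some j = 0"
  shows "concave_on S (Fobj \<Omega>)"
  unfolding concave_on_iff
proof (intro conjI \<open>convex S\<close> ballI allI impI)
  fix p q and u v :: real
  assume "p \<in> S" "q \<in> S" and uv: "0 \<le> u" "0 \<le> v" "u + v = 1"
  obtain A B A' B' where pq: "p = (A, B)" "q = (A', B')"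
    by fastforce
  have term_le: "u * (sqrt (A $ Some i $ Some j * B $ Some i $ Some j) * \<Omega> $ i $ j)
      + v * (sqrt (A' $ Some i $ Some j * B' $ Some i $ Some j) * \<Omega> $ i $ j)
      \<le> sqrt ((u * A $ Some i $ Some j + v * A' $ Some i $ Some j)
           * (u * B $ Some i $ Some j + v * B' $ Some i $ Some j)) * \<Omega> $ i $ j" for i j
  proof (cases "0 < \<Omega> $ i $ j")
    case True
    have "u * sqrt (A $ Some i $ Some j * B $ Some i $ Some j)
        + v * sqrt (A' $ Some i $ Some j * B' $ Some i $ Some j)
        \<le> sqrt ((u * A $ Some i $ Some j + v * A' $ Some i $ Some j)
           * (u * B $ Some i $ Some j + v * B' $ Some i $ Some j))"
      using nonneg \<open>p \<in> S\<close> \<open>q \<in> S\<close> uv unfolding pq by (intro convex_comb_sqrt_mult_le) auto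
    then show ?thesis
      using True by (simp add: mult_right_mono flip: mult.assoc distrib_right)
  next
    case False
    then show ?thesis
      using vanish \<open>p \<in> S\<close> \<open>q \<in> S\<close> unfolding pq by simp
  qed
  then show "u * Fobj \<Omega> p + v * Fobj \<Omega> q \<le> Fobj \<Omega> (u *\<^sub>R p + v *\<^sub>R q)"
    unfolding pq Fobj_def
    by (simp add: sum_distrib_left flip: sum.distrib) (intro sum_mono term_le)
qed

lemma calA_tilde_dominates_calA:
  assumes "q \<in> calA a b"
  obtains p where "p \<in> calA_tilde \<Omega> a b" "Fobj \<Omega> q \<le> Fobj \<Omega> p"
proof -
  obtain A B where q: "q = (A, B)" "A \<in> row_plans a" "transpose B \<in> row_plans b"
    using assms by (auto simp: calA_eq_Times mem_transpose_image)
  obtain A' where A': "A' \<in> adapted_row_plans \<Omega> a"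
    "\<And>i j. 0 < \<Omega> $ i $ j \<Longrightarrow> A $ Some i $ Some j \<le> A' $ Some i $ Some j"
    using adapted_row_plan_above[OF q(2)] by blast
  obtain B' where B': "B' \<in> adapted_row_plans (transpose \<Omega>) b"
    "\<And>j i. 0 < transpose \<Omega> $ j $ i \<Longrightarrow> transpose B $ Some j $ Some i \<le> B' $ Some j $ Some i"
    using adapted_row_plan_above[OF q(3)] by blast
  show thesis
  proof
    show "(A', transpose B') \<in> calA_tilde \<Omega> a b"
      using A' B' by (simp add: calA_tilde_eq_Times mem_transpose_image)
    show "Fobj \<Omega> q \<le> Fobj \<Omega> (A', transpose B')"
      unfolding q(1)
    proof (rule Fobj_mono)
      show "0 \<le> A $ Some i $ Some j" "0 \<le> B $ Some i $ Some j" for i j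
        using q(2,3) by (simp_all add: row_plans_def)
      show "A $ Some i $ Some j \<le> A' $ Some i $ Some j" if "0 < \<Omega> $ i $ j" for i j
        using A'(2) that .
      show "B $ Some i $ Some j \<le> transpose B' $ Some i $ Some j" if "0 < \<Omega> $ i $ j" for i j
        using B'(2)[of j i] that by simp
      show "A' $ Some i $ Some j = 0" if "\<Omega> $ i $ j \<le> 0" for i j
        using A'(1) that by (simp add: adapted_row_plans_def)
    qed
  qed
qed

lemma calA_nonempty:
  fixes a :: "real ^ 'm::finite" and b :: "real ^ 'n::finite"
  assumes "\<And>i. 0 \<le> a $ i" and "\<And>j. 0 \<le> b $ j"
  shows "calA a b \<noteq> {}"
proof -
  obtain A :: "real ^ 'n option ^ 'm option" where "A \<in> row_plans a"
    using row_plans_nonempty[of a] assms(1) by blast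
  moreover obtain B :: "real ^ 'm option ^ 'n option" where "B \<in> row_plans b"
    using row_plans_nonempty[of b] assms(2) by blast
  ultimately have "(A, transpose B) \<in> calA a b"
    by (simp add: calA_eq_Times mem_transpose_image)
  then show ?thesis by blast
qed

lemma compact_calA_tilde: "compact (calA_tilde \<Omega> a b)"
proof -
  have "continuous_on S transpose" for S :: "(real ^ 'm::finite option ^ 'n::finite option) set"
    unfolding transpose_def by (intro continuous_intros)
  then show ?thesis
    unfolding calA_tilde_eq_Times
    by (intro compact_Times compact_adapted_row_plans compact_continuous_image)
qed

lemma convex_calA_tilde: "convex (calA_tilde \<Omega> a b)"
  unfolding calA_tilde_eq_Times
  by (intro convex_Times convex_adapted_row_plans convex_linear_image linear_transpose)

lemma concave_on_calA_tilde_Fobj: "concave_on (calA_tilde \<Omega> a b) (Fobj \<Omega>)"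
  by (rule concave_on_Fobj[OF convex_calA_tilde]) (simp_all add: calA_tilde_def calA_def)

theorem lemma2p14:
  fixes a :: "real ^ 'm::finite" and b :: "real ^ 'n::finite" and \<Omega> :: "real ^ 'n ^ 'm"
  assumes "\<forall>i. a $ i > 0" and "\<forall>j. b $ j > 0"
  shows "(\<exists>p\<in>calA_tilde \<Omega> a b. \<forall>q\<in>calA a b. Fobj \<Omega> q \<le> Fobj \<Omega> p)
    \<and> convex (calA_tilde \<Omega> a b) \<and> compact (calA_tilde \<Omega> a b)
    \<and> concave_on (calA_tilde \<Omega> a b) (Fobj \<Omega>)"
proof -
  have "calA a b \<noteq> {}"
    using assms by (intro calA_nonempty) (simp_all add: less_imp_le)
  then have "calA_tilde \<Omega> a b \<noteq> {}"
    using calA_tilde_dominates_calA by blast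
  moreover have "continuous_on (calA_tilde \<Omega> a b) (Fobj \<Omega>)"
    unfolding Fobj_def by (intro continuous_intros)
  ultimately obtain p where p: "p \<in> calA_tilde \<Omega> a b"
    "\<And>p'. p' \<in> calA_tilde \<Omega> a b \<Longrightarrow> Fobj \<Omega> p' \<le> Fobj \<Omega> p"
    using continuous_attains_sup[OF compact_calA_tilde] by blast
  have "Fobj \<Omega> q \<le> Fobj \<Omega> p" if q: "q \<in> calA a b" for q
  proof -
    obtain p' where "p' \<in> calA_tilde \<Omega> a b" "Fobj \<Omega> q \<le> Fobj \<Omega> p'"
      using calA_tilde_dominates_calA[OF q] by blast
    then show ?thesis
      using p(2) by (blast intro: order_trans)
  qed
  then show ?thesis
    using p(1) convex_calA_tilde compact_calA_tilde concave_on_calA_tilde_Fobj by blast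
qed

end
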